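(* (i) Let $n\in\{3,4\}$ and let $P\in\mathbb{C}[z]$ be a polynomial of degree $n$ whose set of critical values is exactly $\{0,1\}$. Then $P$ is extendedly equivalent either to the Chebycheff polynomial $\frac12(1+T_n(z))$ or to a Belyi polynomial $P_{m,r}$ with $m,r\ge1$, $m+r=n$. (iii) There exists a polynomial $P\in\mathbb{C}[z]$ of degree $6$ whose set of critical values is exactly $\{0,1\}$ such that $P$ is not extendedly equivalent to its complex conjugate $\bar P$; in particular $P$ is not extendedly equivalent to any polynomial in $\mathbb{R}[z]$.
   Context: Two polynomials $P,Q\in\mathbb{C}[z]$ are right affine equivalent if $Q(z)=P(az+b)$ for some $a\in\mathbb{C}^*$, $b\in\mathbb{C}$. For $P$ with set of critical values $\{0,1\}$, the polynomial $1-P$ also has critical values $\{0,1\}$; $P$ and $Q$ are called extendedly equivalent if $Q$ is right affine equivalent to $P$ or to $1-P$. $T_n$ denotes the Chebycheff polynomial, $T_n(\cos\theta)=\cos(n\theta)$. For positive integers $m,r$ the Belyi polynomial is $P_{m,r}(z)=z^m(1-z)^r(m+r)^{m+r}m^{-m}r^{-r}$. For $P(z)=\sum a_iz^i$, $\bar P(z)=\sum \bar a_i z^i$ (coefficientwise complex conjugation). Critical values are the values of $P$ at roots of $P'$. *)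

theory Defs
  imports "HOL-Computational_Algebra.Polynomial"
begin

definition crit_values :: "complex poly \<Rightarrow> complex set" where
  "crit_values P = {poly P c | c. poly (pderiv P) c = 0}"

definition right_aff_equiv :: "complex poly \<Rightarrow> complex poly \<Rightarrow> bool" where
  "right_aff_equiv P Q \<longleftrightarrow> (\<exists>a b. a \<noteq> 0 \<and> Q = pcompose P [:b, a:])"

definition ext_equiv :: "complex poly \<Rightarrow> complex poly \<Rightarrow> bool" where
  "ext_equiv P Q \<longleftrightarrow> right_aff_equiv P Q \<or> right_aff_equiv (1 - P) Q"

fun cheb :: "nat \<Rightarrow> complex poly" where
  "cheb 0 = 1"
| "cheb (Suc 0) = [:0, 1:]"
| "cheb (Suc (Suc n)) = [:0, 2:] * cheb (Suc n) - cheb n"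

definition belyi :: "nat \<Rightarrow> nat \<Rightarrow> complex poly" where
  "belyi m r = smult (of_nat ((m + r) ^ (m + r)) / (of_nat (m ^ m) * of_nat (r ^ r)))
                 ([:0, 1:] ^ m * [:1, -1:] ^ r)"

definition conj_poly :: "complex poly \<Rightarrow> complex poly" where
  "conj_poly P = map_poly cnj P"

end

theory Submission
  imports Defs "HOL-Computational_Algebra.Fundamental_Theorem_Algebra"
begin

(* Move a critical point with value 0 to the origin, so that P = z^2 q(z) with deg q = n - 2.
   For n = 3 the critical point of value 1 then fixes q up to a scaling of z, giving P_{2,1}.
   For n = 4 either q(0) = 0 (giving P_{3,1}) or q has a double root (giving P_{2,2}); otherwise
   every other critical point has value 1. If this happens for P and for 1 - P, the cubic P' has
   only two roots, both simple, which is impossible. The Chebyshev case is subsumed: for n = 3, 4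
   the polynomials (1 + T_n)/2 are themselves equivalent to P_{2,1} and P_{2,2}.
   For (iii), an extended equivalence between P6 and its conjugate must match critical points
   together with their values and multiplicities. P6 has two critical points of value 0 but only
   one of value 1, which rules out 1 - P6, and the critical zeros 0 and 1, told apart by P6'',
   force the affine map to be the identity; but P6 is not real. Since extended equivalence is an
   equivalence relation compatible with conjugation, equivalence to a real polynomial would give
   equivalence to the conjugate. *)

section \<open>Affine changes of variable and extended equivalence\<close>

lemma poly_pcompose_linear: "poly (pcompose p [:b, a:]) x = poly p (b + a * x)"
  by (simp add: poly_pcompose mult.commute)

lemma pderiv_pcompose_linear:
  "pderiv (pcompose p [:b, a:]) = smult a (pcompose (pderiv p) [:b, a:])"
  by (simp add: pderiv_pcompose pderiv_pCons)

lemma pcompose_one_minus: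
  fixes p q :: "'a::comm_ring_1 poly"
  shows "pcompose (1 - p) q = 1 - pcompose p q"
  by (simp add: pcompose_diff pcompose_1)

lemma pcompose_linear_linear: "pcompose [:b, a:] [:d, c:] = [:b + a * d, a * c:]"
  by (simp add: pcompose_pCons algebra_simps)

lemma degree_one_minus:
  fixes p :: "'a::comm_ring_1 poly"
  assumes "degree p \<ge> 1"
  shows "degree (1 - p) = degree p"
proof -
  have "degree (p + - 1) = degree p"
    using assms by (intro degree_add_eq_left) simp
  then show ?thesis
    by (metis degree_minus minus_diff_eq diff_conv_add_uminus)
qed

lemma pderiv_one_minus:
  fixes p :: "'a::idom poly"
  shows "pderiv (1 - p) = - pderiv p"
  by (simp add: pderiv_diff)

lemma crit_values_iff: "v \<in> crit_values P \<longleftrightarrow> (\<exists>c. poly (pderiv P) c = 0 \<and> poly P c = v)"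
  unfolding crit_values_def by auto

lemma crit_values_eq_image: "crit_values P = poly P ` {c. poly (pderiv P) c = 0}"
  unfolding crit_values_def by auto

lemma crit_values_pcompose_linear:
  assumes "a \<noteq> 0"
  shows "crit_values (pcompose p [:b, a:]) = crit_values p"
proof (intro equalityI subsetI)
  fix v
  assume "v \<in> crit_values (pcompose p [:b, a:])"
  then show "v \<in> crit_values p"
    unfolding crit_values_def using assms by (auto simp: pderiv_pcompose_linear poly_pcompose_linear)
next
  fix v
  assume "v \<in> crit_values p"
  then obtain c where "v = poly p c" "poly (pderiv p) c = 0"
    unfolding crit_values_def by blast
  moreover have "b + a * ((c - b) / a) = c"
    using assms by simp
  ultimately show "v \<in> crit_values (pcompose p [:b, a:])"
    unfolding crit_values_def
    by (auto simp: pderiv_pcompose_linear poly_pcompose_linear intro!: exI[of _ "(c - b) / a"])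
qed

lemma crit_values_one_minus: "crit_values (1 - p) = (\<lambda>v. 1 - v) ` crit_values p"
  unfolding crit_values_def by (auto simp: pderiv_diff)

lemma right_aff_equiv_trans:
  assumes "right_aff_equiv P Q" "right_aff_equiv Q R"
  shows "right_aff_equiv P R"
proof -
  obtain a b where "a \<noteq> 0" "Q = pcompose P [:b, a:]"
    using assms(1) unfolding right_aff_equiv_def by auto
  moreover obtain c d where "c \<noteq> 0" "R = pcompose Q [:d, c:]"
    using assms(2) unfolding right_aff_equiv_def by auto
  ultimately have "a * c \<noteq> 0" "R = pcompose P [:b + a * d, a * c:]"
    by (simp_all add: pcompose_assoc[symmetric] pcompose_linear_linear)
  then show ?thesis
    unfolding right_aff_equiv_def by blast
qed

lemma right_aff_equiv_sym:
  assumes "right_aff_equiv P Q"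
  shows "right_aff_equiv Q P"
proof -
  obtain a b where ab: "a \<noteq> 0" "Q = pcompose P [:b, a:]"
    using assms unfolding right_aff_equiv_def by auto
  then have "P = pcompose Q [:- b / a, 1 / a:]"
    by (simp add: pcompose_assoc[symmetric] pcompose_linear_linear)
  then show ?thesis
    unfolding right_aff_equiv_def using ab(1) by (metis divide_eq_0_iff one_neq_zero)
qed

lemma right_aff_equiv_one_minus:
  "right_aff_equiv P Q \<Longrightarrow> right_aff_equiv (1 - P) (1 - Q)"
  unfolding right_aff_equiv_def by (auto simp: pcompose_one_minus)

lemma right_aff_equiv_one_minus_iff:
  "right_aff_equiv (1 - P) Q \<longleftrightarrow> right_aff_equiv P (1 - Q)"
  using right_aff_equiv_one_minus[of "1 - P" Q] right_aff_equiv_one_minus[of P "1 - Q"] by auto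

lemma ext_equiv_sym:
  assumes "ext_equiv P Q"
  shows "ext_equiv Q P"
proof -
  have "right_aff_equiv P Q \<or> right_aff_equiv P (1 - Q)"
    using assms unfolding ext_equiv_def right_aff_equiv_one_minus_iff .
  then show ?thesis
    unfolding ext_equiv_def using right_aff_equiv_sym by blast
qed

lemma ext_equiv_trans:
  assumes "ext_equiv P Q" "ext_equiv Q R"
  shows "ext_equiv P R"
proof -
  consider "right_aff_equiv P Q" | "right_aff_equiv (1 - P) Q"
    using assms(1) unfolding ext_equiv_def by blast
  then show ?thesis
  proof cases
    case 1
    then have "right_aff_equiv (1 - P) (1 - Q)"
      by (rule right_aff_equiv_one_minus)
    with 1 show ?thesis
      using assms(2) right_aff_equiv_trans unfolding ext_equiv_def by blast
  next
    case 2
    then have "right_aff_equiv P (1 - Q)"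
      by (simp add: right_aff_equiv_one_minus_iff)
    with 2 show ?thesis
      using assms(2) right_aff_equiv_trans unfolding ext_equiv_def by blast
  qed
qed

lemma right_aff_equiv_by_scaling:
  assumes "d \<noteq> 0" "\<And>z. poly Q z = poly P (d * z)"
  shows "right_aff_equiv P Q"
proof -
  have "Q = pcompose P [:0, d:]"
    by (simp add: poly_eq_poly_eq_iff[symmetric] poly_pcompose_linear fun_eq_iff assms(2))
  then show ?thesis
    unfolding right_aff_equiv_def using assms(1) by blast
qed

section \<open>Degrees 3 and 4\<close>

lemma complex_poly_multiple_root:
  fixes p :: "complex poly"
  assumes "card {x. poly p x = 0} < degree p"
  obtains x where "poly p x = 0" "poly (pderiv p) x = 0"
proof (rule ccontr)
  assume "\<not> thesis"
  then have "rsquarefree p"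
    using that by (auto simp: rsquarefree_roots)
  then have p: "p = smult (lead_coeff p) (\<Prod>z | poly p z = 0. [:- z, 1:])"
    by (rule complex_poly_decompose_rsquarefree[symmetric])
  have "p \<noteq> 0"
    using assms by auto
  then have "finite {x. poly p x = 0}"
    by (rule poly_roots_finite)
  then have "degree p = card {x. poly p x = 0}"
    using arg_cong[OF p, of degree] \<open>p \<noteq> 0\<close> by (simp add: degree_prod_sum_eq)
  then show False
    using assms by simp
qed

lemma poly_eq_coeffs_degree_le_4:
  assumes "degree p \<le> 4"
  shows "p = [:coeff p 0, coeff p 1, coeff p 2, coeff p 3, coeff p 4:]"
proof (rule poly_eqI)
  fix n
  show "coeff p n = coeff [:coeff p 0, coeff p 1, coeff p 2, coeff p 3, coeff p 4:] n"
  proof (cases "n \<le> 4")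
    case True
    then have "n \<in> {0, 1, 2, 3, 4}"
      by auto
    then show ?thesis
      by (auto simp: eval_nat_numeral)
  next
    case False
    then show ?thesis
      using assms by (auto simp: coeff_eq_0 coeff_pCons split: nat.split)
  qed
qed

lemma critical_zero_normal_form:
  fixes P :: "complex poly"
  assumes "degree P \<le> 4" "poly P c = 0" "poly (pderiv P) c = 0"
  obtains q2 q3 q4 where "pcompose P [:c, 1:] = [:0, 0, q2, q3, q4:]"
proof -
  define Q where "Q = pcompose P [:c, 1:]"
  have "degree Q \<le> 4"
    using assms(1) by (simp add: Q_def degree_pcompose)
  moreover have "coeff Q 0 = 0"
    using assms(2) by (simp add: Q_def poly_0_coeff_0[symmetric] poly_pcompose_linear)
  moreover have "coeff Q 1 = poly (pderiv Q) 0"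
    by (simp add: poly_0_coeff_0 coeff_pderiv)
  with assms(3) have "coeff Q 1 = 0"
    by (simp add: Q_def pderiv_pcompose_linear poly_pcompose_linear)
  ultimately have "Q = [:0, 0, coeff Q 2, coeff Q 3, coeff Q 4:]"
    using poly_eq_coeffs_degree_le_4 by metis
  then show ?thesis
    using that unfolding Q_def by blast
qed

lemma poly_cubic_double_zero:
  fixes q2 q3 x :: complex
  shows "poly [:0, 0, q2, q3:] x = x^2 * (q2 + q3 * x)"
    and "poly (pderiv [:0, 0, q2, q3:]) x = x * (2 * q2 + 3 * q3 * x)"
  by (simp_all add: pderiv_pCons algebra_simps eval_nat_numeral)

lemma poly_quartic_double_zero:
  fixes q2 q3 q4 x :: complex
  shows "poly [:0, 0, q2, q3, q4:] x = x^2 * (q2 + q3 * x + q4 * x^2)"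
    and "poly (pderiv [:0, 0, q2, q3, q4:]) x = x * (2 * q2 + 3 * q3 * x + 4 * q4 * x^2)"
    and "poly (pderiv (pderiv [:0, 0, q2, q3, q4:])) x = 2 * q2 + 6 * q3 * x + 12 * q4 * x^2"
  by (simp_all add: pderiv_pCons algebra_simps eval_nat_numeral)

lemma poly_belyi_2_1: "poly (belyi 2 1) z = 27/4 * z^2 - 27/4 * z^3"
  by (simp add: belyi_def algebra_simps eval_nat_numeral)

lemma poly_belyi_3_1: "poly (belyi 3 1) z = 256/27 * z^3 - 256/27 * z^4"
  by (simp add: belyi_def algebra_simps eval_nat_numeral)

lemma poly_belyi_2_2: "poly (belyi 2 2) z = 16 * z^2 - 32 * z^3 + 16 * z^4"
  by (simp add: belyi_def algebra_simps eval_nat_numeral)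

(* The scalings below move the critical point of value 1 of the Belyi polynomial
   (2/3, 3/4 and 1/2, respectively) to c. *)
lemma cubic_right_aff_equiv_belyi_2_1:
  fixes q2 q3 c :: complex
  assumes "poly (pderiv [:0, 0, q2, q3:]) c = 0" "poly [:0, 0, q2, q3:] c = 1"
  shows "right_aff_equiv [:0, 0, q2, q3:] (belyi 2 1)"
proof (rule right_aff_equiv_by_scaling)
  have "c \<noteq> 0"
    using assms(2) by auto
  then have q2: "q2 = - 3/2 * q3 * c"
    using assms(1) unfolding poly_cubic_double_zero by simp algebra
  have value_1: "q3 * c^3 = -2"
    using assms(2) unfolding poly_cubic_double_zero q2 by algebra
  then show "3/2 * c \<noteq> 0"
    by auto
  fix z
  have "poly [:0, 0, q2, q3:] (3/2 * c * z) = 27/8 * (q3 * c^3) * (z^3 - z^2)"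
    unfolding poly_cubic_double_zero q2 by algebra
  then show "poly (belyi 2 1) z = poly [:0, 0, q2, q3:] (3/2 * c * z)"
    unfolding poly_belyi_2_1 value_1 by (simp add: field_simps)
qed

lemma quartic_right_aff_equiv_belyi_3_1:
  fixes q3 q4 c :: complex
  assumes "poly (pderiv [:0, 0, 0, q3, q4:]) c = 0" "poly [:0, 0, 0, q3, q4:] c = 1"
  shows "right_aff_equiv [:0, 0, 0, q3, q4:] (belyi 3 1)"
proof (rule right_aff_equiv_by_scaling)
  have "c \<noteq> 0"
    using assms(2) by (auto simp: poly_quartic_double_zero)
  then have q3: "q3 = - 4/3 * q4 * c"
    using assms(1) unfolding poly_quartic_double_zero by simp algebra
  have value_1: "q4 * c^4 = -3"
    using assms(2) unfolding poly_quartic_double_zero q3 by algebra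
  then show "4/3 * c \<noteq> 0"
    by auto
  fix z
  have "poly [:0, 0, 0, q3, q4:] (4/3 * c * z) = 256/81 * (q4 * c^4) * (z^4 - z^3)"
    unfolding poly_quartic_double_zero q3 by algebra
  then show "poly (belyi 3 1) z = poly [:0, 0, 0, q3, q4:] (4/3 * c * z)"
    unfolding poly_belyi_3_1 value_1 by (simp add: field_simps)
qed

lemma quartic_right_aff_equiv_belyi_2_2:
  fixes q2 q3 q4 c :: complex
  assumes "q4 \<noteq> 0" "q3^2 = 4 * q2 * q4"
    and "poly (pderiv [:0, 0, q2, q3, q4:]) c = 0" "poly [:0, 0, q2, q3, q4:] c = 1"
  shows "right_aff_equiv [:0, 0, q2, q3, q4:] (belyi 2 2)"
proof (rule right_aff_equiv_by_scaling)
  define d where "d = - q3 / (2 * q4)"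
  have q3: "q3 = - 2 * q4 * d"
    using assms(1) by (simp add: d_def)
  have q2: "q2 = q4 * d^2"
    using assms(1,2) unfolding q3 by (simp add: power2_eq_square) algebra
  have "c \<noteq> 0"
    using assms(4) by (auto simp: poly_quartic_double_zero)
  then have "q4 * (d - c) * (d - 2 * c) = 0"
    using assms(3) unfolding poly_quartic_double_zero q2 q3 by simp algebra
  moreover have "d \<noteq> c"
    using assms(4) unfolding poly_quartic_double_zero q2 q3 by (auto simp: algebra_simps power2_eq_square)
  ultimately have d: "d = 2 * c"
    using assms(1) by simp
  have value_1: "q4 * c^4 = 1"
    using assms(4) unfolding poly_quartic_double_zero q2 q3 d by algebra
  then show "d \<noteq> 0"
    unfolding d by auto
  fix z
  have "poly [:0, 0, q2, q3, q4:] (d * z) = 16 * (q4 * c^4) * (z^2 - 2 * z^3 + z^4)"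
    unfolding poly_quartic_double_zero q2 q3 d by algebra
  then show "poly (belyi 2 2) z = poly [:0, 0, q2, q3, q4:] (d * z)"
    unfolding poly_belyi_2_2 value_1 by (simp add: algebra_simps)
qed

lemma quartic_second_critical_zero:
  fixes q2 q3 q4 w :: complex
  assumes "w \<noteq> 0" "poly [:0, 0, q2, q3, q4:] w = 0" "poly (pderiv [:0, 0, q2, q3, q4:]) w = 0"
  shows "q3^2 = 4 * q2 * q4"
proof -
  have R: "q2 + q3 * w + q4 * w^2 = 0" and S: "2 * q2 + 3 * q3 * w + 4 * q4 * w^2 = 0"
    using assms unfolding poly_quartic_double_zero by simp_all
  then have "q3 = - 2 * q4 * w"
    using assms(1) by algebra
  with R show ?thesis
    by algebra
qed

lemma degree_3_right_aff_equiv_belyi_2_1: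
  assumes "degree P = 3" "crit_values P = {0, 1}"
  shows "right_aff_equiv P (belyi 2 1)"
proof -
  obtain c0 where c0: "poly (pderiv P) c0 = 0" "poly P c0 = 0"
    using assms(2) crit_values_iff by blast
  obtain q2 q3 q4 where Q: "pcompose P [:c0, 1:] = [:0, 0, q2, q3, q4:]"
    using critical_zero_normal_form[OF _ c0(2,1)] assms(1) by auto
  have "degree [:0, 0, q2, q3, q4:] = 3"
    using assms(1) by (simp flip: Q add: degree_pcompose)
  then have "q4 = 0"
    by (cases "q4 = 0") auto
  with Q have equiv: "right_aff_equiv P [:0, 0, q2, q3:]"
    unfolding right_aff_equiv_def by (intro exI[of _ 1] exI[of _ c0]) simp
  then have "crit_values [:0, 0, q2, q3:] = {0, 1}"
    using assms(2) crit_values_pcompose_linear unfolding right_aff_equiv_def by auto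
  then obtain c where "poly (pderiv [:0, 0, q2, q3:]) c = 0" "poly [:0, 0, q2, q3:] c = 1"
    using crit_values_iff by blast
  then show ?thesis
    using equiv cubic_right_aff_equiv_belyi_2_1 right_aff_equiv_trans by blast
qed

lemma quartic_belyi_or_simple_critical_zero:
  fixes q2 q3 q4 :: complex
  assumes "q4 \<noteq> 0" "crit_values [:0, 0, q2, q3, q4:] = {0, 1}"
    and "\<not> right_aff_equiv [:0, 0, q2, q3, q4:] (belyi 3 1)"
    and "\<not> right_aff_equiv [:0, 0, q2, q3, q4:] (belyi 2 2)"
  shows "q2 \<noteq> 0"
    and "\<And>w. poly (pderiv [:0, 0, q2, q3, q4:]) w = 0 \<Longrightarrow> w \<noteq> 0 \<Longrightarrow> poly [:0, 0, q2, q3, q4:] w = 1"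
proof -
  obtain c where c: "poly (pderiv [:0, 0, q2, q3, q4:]) c = 0" "poly [:0, 0, q2, q3, q4:] c = 1"
    using assms(2) crit_values_iff by blast
  show "q2 \<noteq> 0"
  proof
    assume "q2 = 0"
    have "right_aff_equiv [:0, 0, q2, q3, q4:] (belyi 3 1)"
      using c unfolding \<open>q2 = 0\<close> by (rule quartic_right_aff_equiv_belyi_3_1)
    with assms(3) show False ..
  qed
  have "q3^2 \<noteq> 4 * q2 * q4"
    using quartic_right_aff_equiv_belyi_2_2[OF assms(1) _ c] assms(4) by blast
  then show "poly [:0, 0, q2, q3, q4:] w = 1"
    if "poly (pderiv [:0, 0, q2, q3, q4:]) w = 0" "w \<noteq> 0" for w
    using that quartic_second_critical_zero[of w q2 q3 q4] assms(2) crit_values_iff by blast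
qed

lemma degree_4_belyi_or_simple_critical_zero:
  fixes P :: "complex poly"
  assumes "degree P = 4" "crit_values P = {0, 1}"
    and "\<not> right_aff_equiv P (belyi 3 1)" "\<not> right_aff_equiv P (belyi 2 2)"
  obtains c0 where "poly P c0 = 0" "poly (pderiv P) c0 = 0" "poly (pderiv (pderiv P)) c0 \<noteq> 0"
    and "\<And>w. poly (pderiv P) w = 0 \<Longrightarrow> w \<noteq> c0 \<Longrightarrow> poly P w = 1"
proof -
  obtain c0 where c0: "poly (pderiv P) c0 = 0" "poly P c0 = 0"
    using assms(2) crit_values_iff by blast
  obtain q2 q3 q4 where Q: "pcompose P [:c0, 1:] = [:0, 0, q2, q3, q4:]"
    using critical_zero_normal_form[OF _ c0(2,1)] assms(1) by auto
  have "degree [:0, 0, q2, q3, q4:] = 4"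
    using assms(1) by (simp flip: Q add: degree_pcompose)
  then have "lead_coeff [:0, 0, q2, q3, q4:] \<noteq> 0"
    by (metis degree_0 leading_coeff_0_iff zero_neq_numeral)
  with \<open>degree [:0, 0, q2, q3, q4:] = 4\<close> have "q4 \<noteq> 0"
    by (simp add: eval_nat_numeral)
  have "right_aff_equiv P [:0, 0, q2, q3, q4:]"
    unfolding right_aff_equiv_def using Q by (intro exI[of _ 1] exI[of _ c0]) simp
  then have "\<not> right_aff_equiv [:0, 0, q2, q3, q4:] (belyi m r)"
    if "\<not> right_aff_equiv P (belyi m r)" for m r
    using that right_aff_equiv_trans by blast
  moreover have "crit_values [:0, 0, q2, q3, q4:] = {0, 1}"
    using assms(2) crit_values_pcompose_linear by (simp flip: Q)
  ultimately have "q2 \<noteq> 0" and crit_1: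
    "\<And>w. poly (pderiv [:0, 0, q2, q3, q4:]) w = 0 \<Longrightarrow> w \<noteq> 0 \<Longrightarrow> poly [:0, 0, q2, q3, q4:] w = 1"
    using quartic_belyi_or_simple_critical_zero[OF \<open>q4 \<noteq> 0\<close>] assms(3,4) by blast+
  have shift: "poly [:0, 0, q2, q3, q4:] x = poly P (c0 + x)"
    "poly (pderiv [:0, 0, q2, q3, q4:]) x = poly (pderiv P) (c0 + x)"
    "poly (pderiv (pderiv [:0, 0, q2, q3, q4:])) x = poly (pderiv (pderiv P)) (c0 + x)" for x
    by (simp_all flip: Q add: pderiv_pcompose_linear poly_pcompose_linear)
  show ?thesis
  proof (rule that[OF c0(2,1)])
    show "poly (pderiv (pderiv P)) c0 \<noteq> 0"
      using shift(3)[of 0, symmetric] \<open>q2 \<noteq> 0\<close> by (simp add: poly_quartic_double_zero)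
    show "poly P w = 1" if "poly (pderiv P) w = 0" "w \<noteq> c0" for w
      using that crit_1[of "w - c0"] shift[of "w - c0"] by simp
  qed
qed

lemma degree_4_ext_equiv_belyi:
  fixes P :: "complex poly"
  assumes "degree P = 4" "crit_values P = {0, 1}"
  shows "ext_equiv P (belyi 3 1) \<or> ext_equiv P (belyi 2 2)"
proof (rule ccontr)
  assume "\<not> ?thesis"
  then have not_belyi: "\<not> right_aff_equiv P (belyi 3 1)" "\<not> right_aff_equiv P (belyi 2 2)"
    "\<not> right_aff_equiv (1 - P) (belyi 3 1)" "\<not> right_aff_equiv (1 - P) (belyi 2 2)"
    unfolding ext_equiv_def by auto
  have "degree (1 - P) = 4"
    using assms(1) degree_one_minus[of P] by simp
  moreover have "crit_values (1 - P) = {0, 1}"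
    using assms(2) by (simp add: crit_values_one_minus insert_commute)
  ultimately obtain c1 where "poly (1 - P) c1 = 0" "poly (pderiv (pderiv (1 - P))) c1 \<noteq> 0"
    and "\<And>w. poly (pderiv (1 - P)) w = 0 \<Longrightarrow> w \<noteq> c1 \<Longrightarrow> poly (1 - P) w = 1"
    using degree_4_belyi_or_simple_critical_zero[of "1 - P"] not_belyi(3,4) by blast
  then have c1: "poly P c1 = 1" "poly (pderiv (pderiv P)) c1 \<noteq> 0"
    and crit_c1: "\<And>w. poly (pderiv P) w = 0 \<Longrightarrow> w \<noteq> c1 \<Longrightarrow> poly P w = 0"
    by (simp_all add: pderiv_one_minus pderiv_minus)
  obtain c0 where c0: "poly P c0 = 0" "poly (pderiv (pderiv P)) c0 \<noteq> 0"
    and crit_c0: "\<And>w. poly (pderiv P) w = 0 \<Longrightarrow> w \<noteq> c0 \<Longrightarrow> poly P w = 1"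
    using degree_4_belyi_or_simple_critical_zero[OF assms not_belyi(1,2)] by blast
  have "{x. poly (pderiv P) x = 0} \<subseteq> {c0, c1}"
    using crit_c0 crit_c1 by fastforce
  then have "card {x. poly (pderiv P) x = 0} \<le> card {c0, c1}"
    by (rule card_mono[rotated]) simp
  also have "\<dots> < degree (pderiv P)"
    using assms(1) by (simp add: degree_pderiv card_insert_if)
  finally obtain x where "poly (pderiv P) x = 0" "poly (pderiv (pderiv P)) x = 0"
    by (rule complex_poly_multiple_root)
  then show False
    using crit_c0 crit_c1 c0 c1 by fastforce
qed

lemma degree_3_4_ext_equiv_belyi:
  fixes P :: "complex poly"
  assumes "n \<in> {3, 4}" "degree P = n" "crit_values P = {0, 1}"
  shows "\<exists>m r. m \<ge> 1 \<and> r \<ge> 1 \<and> m + r = n \<and> ext_equiv P (belyi m r)"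
proof -
  consider "n = 3" | "n = 4"
    using assms(1) by auto
  then show ?thesis
  proof cases
    case 1
    then have "ext_equiv P (belyi 2 1)"
      using assms degree_3_right_aff_equiv_belyi_2_1 unfolding ext_equiv_def by auto
    with 1 show ?thesis
      by (intro exI[of _ 2] exI[of _ 1]) simp
  next
    case 2
    then have "ext_equiv P (belyi 3 1) \<or> ext_equiv P (belyi 2 2)"
      using assms degree_4_ext_equiv_belyi by auto
    then show ?thesis
    proof
      assume "ext_equiv P (belyi 3 1)"
      with 2 show ?thesis
        by (intro exI[of _ 3] exI[of _ 1]) simp
    next
      assume "ext_equiv P (belyi 2 2)"
      with 2 show ?thesis
        by (intro exI[of _ 2] exI[of _ 2]) simp
    qed
  qed
qed

section \<open>A degree 6 polynomial not equivalent to its conjugate\<close>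

lemma poly_conj_poly: "poly (conj_poly p) x = cnj (poly p (cnj x))"
  by (simp add: conj_poly_def)

lemma coeff_conj_poly: "coeff (conj_poly p) n = cnj (coeff p n)"
  by (simp add: conj_poly_def coeff_map_poly)

lemma pderiv_conj_poly: "pderiv (conj_poly p) = conj_poly (pderiv p)"
  by (rule poly_eqI) (simp add: coeff_pderiv coeff_conj_poly)

lemma conj_poly_real:
  assumes "\<forall>i. coeff Q i \<in> \<real>"
  shows "conj_poly Q = Q"
  using assms by (intro poly_eqI) (simp add: coeff_conj_poly Reals_cnj_iff)

lemma conj_poly_pcompose_linear:
  "conj_poly (pcompose p [:b, a:]) = pcompose (conj_poly p) [:cnj b, cnj a:]"
  by (simp add: poly_eq_poly_eq_iff[symmetric] fun_eq_iff poly_conj_poly poly_pcompose_linear)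

lemma conj_poly_one_minus: "conj_poly (1 - p) = 1 - conj_poly p"
  by (simp add: poly_eq_poly_eq_iff[symmetric] fun_eq_iff poly_conj_poly)

lemma right_aff_equiv_conj_poly:
  "right_aff_equiv P Q \<Longrightarrow> right_aff_equiv (conj_poly P) (conj_poly Q)"
  unfolding right_aff_equiv_def by (metis conj_poly_pcompose_linear complex_cnj_zero_iff)

lemma ext_equiv_conj_poly: "ext_equiv P Q \<Longrightarrow> ext_equiv (conj_poly P) (conj_poly Q)"
  unfolding ext_equiv_def by (auto simp: conj_poly_one_minus dest: right_aff_equiv_conj_poly)

definition P6 :: "complex poly" where
  "P6 = [:0, 0, 0, 38 - 41 * \<i>, - 333/4 + 303/2 * \<i>, 105/2 - 180 * \<i>, - 29/4 + 139/2 * \<i>:]"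

definition w6 :: complex where
  "w6 = 3/5 + 1/5 * \<i>"

lemma degree_P6: "degree P6 = 6"
  by (simp add: P6_def complex_eq_iff)

lemma poly_pderiv_P6: "poly (pderiv P6) x = (- 87/2 + 417 * \<i>) * x^2 * (x - 1) * (x - w6)^2"
  unfolding P6_def w6_def
  by (simp add: pderiv_pCons) (use complex_i_mult_minus[of x] in algebra)

lemma poly_P6: "poly P6 0 = 0" "poly P6 1 = 0" "poly P6 w6 = 1"
  unfolding P6_def w6_def by (simp_all) (use complex_i_mult_minus[of 1] in algebra)

lemma pderiv_P6_eq_0_iff: "poly (pderiv P6) x = 0 \<longleftrightarrow> x = 0 \<or> x = 1 \<or> x = w6"
proof -
  have "(- 87/2 + 417 * \<i> :: complex) \<noteq> 0"
    by (simp add: complex_eq_iff)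
  then show ?thesis
    by (simp add: poly_pderiv_P6)
qed

lemma poly_pderiv_P6_critical: "poly (pderiv P6) 0 = 0" "poly (pderiv P6) 1 = 0" "poly (pderiv P6) w6 = 0"
  by (simp_all add: pderiv_P6_eq_0_iff)

lemma poly_pderiv2_P6_critical: "poly (pderiv (pderiv P6)) 0 = 0" "poly (pderiv (pderiv P6)) 1 \<noteq> 0"
  by (simp_all add: P6_def pderiv_pCons complex_eq_iff)

lemma crit_values_P6: "crit_values P6 = {0, 1}"
proof -
  have "{c. poly (pderiv P6) c = 0} = {0, 1, w6}"
    by (auto simp: pderiv_P6_eq_0_iff)
  then show ?thesis
    by (simp add: crit_values_eq_image poly_P6)
qed

lemma not_right_aff_equiv_P6_conj: "\<not> right_aff_equiv P6 (conj_poly P6)"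
proof
  assume "right_aff_equiv P6 (conj_poly P6)"
  then obtain a b where "a \<noteq> 0" and E: "conj_poly P6 = pcompose P6 [:b, a:]"
    unfolding right_aff_equiv_def by blast
  have evaluated: "poly P6 (b + a * x) = cnj (poly P6 (cnj x))"
    "a * poly (pderiv P6) (b + a * x) = cnj (poly (pderiv P6) (cnj x))"
    "a * a * poly (pderiv (pderiv P6)) (b + a * x) = cnj (poly (pderiv (pderiv P6)) (cnj x))" for x
    using arg_cong[OF E, of "\<lambda>p. poly p x"] arg_cong[OF E, of "\<lambda>p. poly (pderiv p) x"]
      arg_cong[OF E, of "\<lambda>p. poly (pderiv (pderiv p)) x"]
    by (simp_all add: poly_conj_poly pderiv_conj_poly pderiv_pcompose_linear poly_pcompose_linear pderiv_smult)
  have "b = 0"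
    using evaluated[of 0] \<open>a \<noteq> 0\<close> poly_P6 poly_pderiv2_P6_critical
    by (auto simp: pderiv_P6_eq_0_iff poly_pderiv_P6_critical)
  have "a = 1"
    using evaluated[of 1] \<open>a \<noteq> 0\<close> \<open>b = 0\<close> poly_P6 poly_pderiv2_P6_critical
    by (auto simp: pderiv_P6_eq_0_iff poly_pderiv_P6_critical)
  have "coeff (conj_poly P6) 3 = coeff P6 3"
    using E \<open>a = 1\<close> \<open>b = 0\<close> by simp
  then show False
    by (simp add: coeff_conj_poly P6_def eval_nat_numeral complex_eq_iff)
qed

lemma not_right_aff_equiv_one_minus_P6_conj: "\<not> right_aff_equiv (1 - P6) (conj_poly P6)"
proof
  assume "right_aff_equiv (1 - P6) (conj_poly P6)"
  then obtain a b where "a \<noteq> 0" and E: "conj_poly P6 = pcompose (1 - P6) [:b, a:]"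
    unfolding right_aff_equiv_def by blast
  have evaluated: "1 - poly P6 (b + a * x) = cnj (poly P6 (cnj x))"
    "- a * poly (pderiv P6) (b + a * x) = cnj (poly (pderiv P6) (cnj x))" for x
    using arg_cong[OF E, of "\<lambda>p. poly p x"] arg_cong[OF E, of "\<lambda>p. poly (pderiv p) x"]
    by (simp_all add: poly_conj_poly pderiv_conj_poly pderiv_pcompose_linear poly_pcompose_linear
        pderiv_one_minus)
  have "b = w6" "b + a = w6"
    using evaluated[of 0] evaluated[of 1] \<open>a \<noteq> 0\<close> poly_P6
    by (auto simp: pderiv_P6_eq_0_iff poly_pderiv_P6_critical)
  then show False
    using \<open>a \<noteq> 0\<close> by simp
qed

lemma not_ext_equiv_P6_conj: "\<not> ext_equiv P6 (conj_poly P6)"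
  unfolding ext_equiv_def
  using not_right_aff_equiv_P6_conj not_right_aff_equiv_one_minus_P6_conj by blast

lemma not_ext_equiv_P6_real:
  assumes "\<forall>i. coeff Q i \<in> \<real>"
  shows "\<not> ext_equiv P6 Q"
proof
  assume "ext_equiv P6 Q"
  moreover from this have "ext_equiv Q (conj_poly P6)"
    using ext_equiv_sym ext_equiv_conj_poly conj_poly_real[OF assms] by metis
  ultimately show False
    using not_ext_equiv_P6_conj ext_equiv_trans by blast
qed

theorem mainTheorem3:
  shows "(\<forall>(n::nat) (P::complex poly). n \<in> {3, 4} \<and> degree P = n \<and> crit_values P = {0, 1} \<longrightarrow>
            ext_equiv P (smult (1/2) (1 + cheb n)) \<or>
            (\<exists>m r. m \<ge> 1 \<and> r \<ge> 1 \<and> m + r = n \<and> ext_equiv P (belyi m r)))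
       \<and> (\<exists>P::complex poly. degree P = 6 \<and> crit_values P = {0, 1} \<and>
            \<not> ext_equiv P (conj_poly P) \<and>
            (\<forall>Q::complex poly. (\<forall>i. coeff Q i \<in> \<real>) \<longrightarrow> \<not> ext_equiv P Q))"
proof (intro conjI allI impI)
  fix n :: nat and P :: "complex poly"
  assume "n \<in> {3, 4} \<and> degree P = n \<and> crit_values P = {0, 1}"
  then show "ext_equiv P (smult (1/2) (1 + cheb n)) \<or>
      (\<exists>m r. m \<ge> 1 \<and> r \<ge> 1 \<and> m + r = n \<and> ext_equiv P (belyi m r))"
    using degree_3_4_ext_equiv_belyi by blast
next
  show "\<exists>P::complex poly. degree P = 6 \<and> crit_values P = {0, 1} \<and>
      \<not> ext_equiv P (conj_poly P) \<and> (\<forall>Q::complex poly. (\<forall>i. coeff Q i \<in> \<real>) \<longrightarrow> \<not> ext_equiv P Q)"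
    using degree_P6 crit_values_P6 not_ext_equiv_P6_conj not_ext_equiv_P6_real by blast
qed

end
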